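(* Let $D\subset\mathbb{R}^d$ be measurable, $k$ a measurable positive definite kernel with the integrals below finite, and $r:D\to[0,\infty)$. Let $\bar{\mathbf{x}}_1,\dots,\bar{\mathbf{x}}_n\in D$ be distinct with replicate counts $a_1,\dots,a_n\ge1$, $N=\sum_i a_i$; let $\mathbf{K}_{(N,n)}$ be the $n\times n$ matrix with entries $k(\bar{\mathbf{x}}_i,\bar{\mathbf{x}}_j)+\delta_{ij}r(\bar{\mathbf{x}}_i)/a_i$ (assumed invertible), $\mathbf{k}_n(\mathbf{x})=(k(\mathbf{x},\bar{\mathbf{x}}_i))_{i=1}^n$, $\mathbf{W}_n$ the matrix with entries $\int_D k(\bar{\mathbf{x}}_i,\mathbf{x})k(\bar{\mathbf{x}}_j,\mathbf{x})\,d\mathbf{x}$, $E=\int_D k(\mathbf{x},\mathbf{x})\,d\mathbf{x}$, and $I_N=\int_D\big(k(\mathbf{x},\mathbf{x})-\mathbf{k}_n(\mathbf{x})^\top\mathbf{K}_{(N,n)}^{-1}\mathbf{k}_n(\mathbf{x})\big)d\mathbf{x}$. For $k\in\{1,\dots,n\}$ with $r(\bar{\mathbf{x}}_k)>0$, let $I_{N+1}(\bar{\mathbf{x}}_k)$ denote the same integral computed for the design in which $a_k$ is replaced by $a_k+1$ (one additional replicate at $\bar{\mathbf{x}}_k$), and let $$\mathbf{B}_k=\frac{(\mathbf{K}_{(N,n)}^{-1})_{\cdot,k}(\mathbf{K}_{(N,n)}^{-1})_{k,\cdot}}{a_k(a_k+1)/r(\bar{\mathbf{x}}_k)-(\mathbf{K}_{(N,n)}^{-1})_{k,k}}$$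 (denominator assumed nonzero). Then $$I_{N+1}(\bar{\mathbf{x}}_k)=I_N-\mathrm{tr}(\mathbf{B}_k\mathbf{W}_n).$$
   Context: Setting: Gaussian process regression with zero-mean GP prior with kernel $k$ and independent Gaussian noise of variance $r(\mathbf{x})$, with $a_i$ replicates at unique site $\bar{\mathbf{x}}_i$; $I_N$ is the integrated mean-squared prediction error (integral over $D$ of the de-noised posterior variance). $(\cdot)_{\cdot,k}$, $(\cdot)_{k,\cdot}$ denote the $k$-th column and row, $\delta_{ij}$ the Kronecker delta. *)

theory Defs
  imports "HOL-Analysis.Analysis"
begin

definition pd_kernel :: "('a \<Rightarrow> 'a \<Rightarrow> real) \<Rightarrow> bool" where
  "pd_kernel k \<longleftrightarrow> (\<forall>x y. k x y = k y x) \<and>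
     (\<forall>(m::nat) (x::nat \<Rightarrow> 'a) (c::nat \<Rightarrow> real).
        (\<Sum>i<m. \<Sum>j<m. c i * c j * k (x i) (x j)) \<ge> 0)"

definition Kmat :: "('a \<Rightarrow> 'a \<Rightarrow> real) \<Rightarrow> ('a \<Rightarrow> real) \<Rightarrow> ('n::finite \<Rightarrow> 'a)
    \<Rightarrow> ('n \<Rightarrow> nat) \<Rightarrow> real^'n^'n" where
  "Kmat k r xb a = (\<chi> i j. k (xb i) (xb j) + (if i = j then r (xb i) / real (a i) else 0))"

definition kvec :: "('a \<Rightarrow> 'a \<Rightarrow> real) \<Rightarrow> ('n::finite \<Rightarrow> 'a) \<Rightarrow> 'a \<Rightarrow> real^'n" where
  "kvec k xb x = (\<chi> i. k x (xb i))"

definition Wmat :: "(real^'d) set \<Rightarrow> (real^'d \<Rightarrow> real^'d \<Rightarrow> real)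
    \<Rightarrow> ('n::finite \<Rightarrow> real^'d) \<Rightarrow> real^'n^'n" where
  "Wmat D k xb = (\<chi> i j. (LINT x:D|lborel. k (xb i) x * k (xb j) x))"

definition IMSPE :: "(real^'d) set \<Rightarrow> (real^'d \<Rightarrow> real^'d \<Rightarrow> real) \<Rightarrow> (real^'d \<Rightarrow> real)
    \<Rightarrow> ('n::finite \<Rightarrow> real^'d) \<Rightarrow> ('n \<Rightarrow> nat) \<Rightarrow> real" where
  "IMSPE D k r xb a = (LINT x:D|lborel.
      k x x - kvec k xb x \<bullet> (matrix_inv (Kmat k r xb a) *v kvec k xb x))"

definition Bmat :: "(real^'d \<Rightarrow> real^'d \<Rightarrow> real) \<Rightarrow> (real^'d \<Rightarrow> real)
    \<Rightarrow> ('n::finite \<Rightarrow> real^'d) \<Rightarrow> ('n \<Rightarrow> nat) \<Rightarrow> 'n \<Rightarrow> real^'n^'n" where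
  "Bmat k r xb a l = (let Ki = matrix_inv (Kmat k r xb a) in
     (\<chi> i j. (Ki $ i $ l * Ki $ l $ j) /
        (real (a l) * (real (a l) + 1) / r (xb l) - Ki $ l $ l)))"

end

theory Submission
  imports Defs
begin

text \<open>One more replicate at the site with index l only lowers the l-th diagonal entry
  r/a_l of K to r/(a_l+1), a rank-one change of size -r/(a_l(a_l+1)). The Sherman-Morrison
  formula turns this into K_new^-1 = K^-1 + B_l. On the other hand, integrating the quadratic
  form of the posterior variance entrywise gives I_N = E - tr(K^-1 W), which is linear in
  K^-1.\<close>

lemma set_integral_sum:
  fixes f :: "'i \<Rightarrow> 'a \<Rightarrow> 'b::{banach, second_countable_topology}"
  assumes "\<And>i. i \<in> I \<Longrightarrow> set_integrable M A (f i)"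
  shows "set_integrable M A (\<lambda>x. \<Sum>i\<in>I. f i x)"
    and "(LINT x:A|M. (\<Sum>i\<in>I. f i x)) = (\<Sum>i\<in>I. LINT x:A|M. f i x)"
  using assms
  by (simp_all add: set_integrable_def set_lebesgue_integral_def scaleR_sum_right
      integral_sum)

lemma matrix_add_rdistrib: "((A::real^'n^'m) + B) ** C = A ** C + B ** C"
  by (simp add: matrix_matrix_mult_def vec_eq_iff sum.distrib algebra_simps)

lemma matrix_diff_ldistrib: "(A::real^'n^'m) ** (B - C) = A ** B - A ** C"
  by (simp add: matrix_matrix_mult_def vec_eq_iff sum_subtractf algebra_simps)

lemma matrix_mul_matrix_inv:
  fixes A :: "'a::field^'n^'n"
  assumes "invertible A"
  shows "A ** matrix_inv A = mat 1"
  using assms someI_ex[of "\<lambda>M. A ** M = mat 1 \<and> M ** A = mat 1"]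
  unfolding invertible_def matrix_inv_def by blast

lemma matrix_inv_eqI:
  fixes A M :: "'a::field^'n^'n"
  assumes "A ** M = mat 1"
  shows "matrix_inv A = M"
proof -
  have "M ** A = mat 1" using assms matrix_left_right_inverse by blast
  then have "invertible A" using assms unfolding invertible_def by blast
  then have "M ** (A ** matrix_inv A) = M" by (simp add: matrix_mul_matrix_inv)
  then show ?thesis by (simp add: matrix_mul_assoc \<open>M ** A = mat 1\<close>)
qed

definition outer_product :: "real^'n \<Rightarrow> real^'m \<Rightarrow> real^'m^'n" where
  "outer_product u v = (\<chi> i j. u $ i * v $ j)"

lemma matrix_mul_outer_product: "A ** outer_product u v = outer_product (A *v u) v"
  by (simp add: outer_product_def matrix_matrix_mult_def matrix_vector_mult_def
      vec_eq_iff sum_distrib_right mult.assoc)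

lemma outer_product_mul_matrix: "outer_product u v ** A = outer_product u (v v* A)"
  by (simp add: outer_product_def matrix_matrix_mult_def vector_matrix_mult_def
      vec_eq_iff sum_distrib_left mult.assoc)

lemma outer_product_mult_vector: "outer_product u v *v w = (v \<bullet> w) *\<^sub>R u"
  by (simp add: outer_product_def matrix_vector_mult_def inner_vec_def vec_eq_iff
      sum_distrib_left mult_ac)

lemma outer_product_scaleR_left: "outer_product (c *\<^sub>R u) v = c *\<^sub>R outer_product u v"
  by (simp add: outer_product_def vec_eq_iff)

theorem Sherman_Morrison:
  fixes K :: "real^'n^'n" and u v :: "real^'n"
  defines "w \<equiv> matrix_inv K *v u"
  assumes "invertible K" and "1 + v \<bullet> w \<noteq> 0"
  shows "matrix_inv (K + outer_product u v)
           = matrix_inv K - (1 / (1 + v \<bullet> w)) *\<^sub>R outer_product w (v v* matrix_inv K)"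
proof (rule matrix_inv_eqI)
  define s where "s = 1 / (1 + v \<bullet> w)"
  define y where "y = v v* matrix_inv K"
  have KKi: "K ** matrix_inv K = mat 1" using assms(2) by (rule matrix_mul_matrix_inv)
  have Kw: "K *v w = u" by (simp add: w_def matrix_vector_mul_assoc KKi)
  have "(K + outer_product u v) ** (matrix_inv K - s *\<^sub>R outer_product w y)
      = K ** matrix_inv K + outer_product u v ** matrix_inv K
        - s *\<^sub>R (K ** outer_product w y) - s *\<^sub>R (outer_product u v ** outer_product w y)"
    by (simp add: matrix_add_rdistrib matrix_diff_ldistrib matrix_scalar_ac
        scalar_matrix_assoc[symmetric] scaleR_right_distrib)
  also have "\<dots> = mat 1 + (1 - s * (1 + v \<bullet> w)) *\<^sub>R outer_product u y"
    by (simp add: KKi Kw matrix_mul_outer_product outer_product_mul_matrix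
        outer_product_mult_vector outer_product_scaleR_left y_def algebra_simps)
  also have "\<dots> = mat 1" using assms(3) by (simp add: s_def)
  finally show "(K + outer_product u v) ** (matrix_inv K - s *\<^sub>R outer_product w y)
      = mat 1" .
qed

lemma quadratic_form_kvec_eq:
  assumes "\<And>x y. k x y = k y x"
  shows "kvec k xb x \<bullet> (M *v kvec k xb x)
           = (\<Sum>i\<in>UNIV. \<Sum>j\<in>UNIV. M$i$j * (k (xb i) x * k (xb j) x))"
  unfolding inner_vec_def kvec_def matrix_vector_mult_def
  by (simp add: sum_distrib_left assms mult_ac)

lemma set_integral_quadratic_form_kvec:
  fixes M :: "real^'n::finite^'n" and k :: "real^'d \<Rightarrow> real^'d \<Rightarrow> real"
  assumes sym: "\<And>x y. k x y = k y x"
    and int_W: "\<And>i j. set_integrable lborel D (\<lambda>x. k (xb i) x * k (xb j) x)"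
  shows "set_integrable lborel D (\<lambda>x. kvec k xb x \<bullet> (M *v kvec k xb x))"
    and "(LINT x:D|lborel. kvec k xb x \<bullet> (M *v kvec k xb x)) = trace (M ** Wmat D k xb)"
proof -
  have entries: "set_integrable lborel D (\<lambda>x. M$i$j * (k (xb i) x * k (xb j) x))" for i j
    using int_W by simp
  have rows: "set_integrable lborel D (\<lambda>x. \<Sum>j\<in>UNIV. M$i$j * (k (xb i) x * k (xb j) x))" for i
    using entries by (rule set_integral_sum)
  show "set_integrable lborel D (\<lambda>x. kvec k xb x \<bullet> (M *v kvec k xb x))"
    unfolding quadratic_form_kvec_eq[OF sym] using rows by (rule set_integral_sum)
  have "(LINT x:D|lborel. kvec k xb x \<bullet> (M *v kvec k xb x))
      = (\<Sum>i\<in>UNIV. \<Sum>j\<in>UNIV. M$i$j * (LINT x:D|lborel. k (xb i) x * k (xb j) x))"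
    unfolding quadratic_form_kvec_eq[OF sym]
    by (simp add: set_integral_sum(2)[OF rows] set_integral_sum(2)[OF entries])
  also have "\<dots> = trace (M ** Wmat D k xb)"
    unfolding trace_def Wmat_def matrix_matrix_mult_def by (simp add: mult.commute)
  finally show "(LINT x:D|lborel. kvec k xb x \<bullet> (M *v kvec k xb x))
      = trace (M ** Wmat D k xb)" .
qed

lemma IMSPE_eq_trace:
  assumes sym: "\<And>x y. k x y = k y x"
    and int_diag: "set_integrable lborel D (\<lambda>x. k x x)"
    and int_W: "\<And>i j. set_integrable lborel D (\<lambda>x. k (xb i) x * k (xb j) x)"
  shows "IMSPE D k r xb a
           = (LINT x:D|lborel. k x x) - trace (matrix_inv (Kmat k r xb a) ** Wmat D k xb)"
  unfolding IMSPE_def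
  by (simp add: set_integral_diff(2)[OF int_diag set_integral_quadratic_form_kvec(1)[OF sym int_W]]
      set_integral_quadratic_form_kvec(2)[OF sym int_W])

lemma Kmat_add_replicate:
  assumes "0 < a l"
  shows "Kmat k r xb (a(l := a l + 1))
           = Kmat k r xb a
             + outer_product (axis l (- (r (xb l) / (real (a l) * (real (a l) + 1))))) (axis l 1)"
proof -
  have "0 < real (a l) + real (a l) * real (a l)" using assms by (simp add: add_pos_pos)
  then show ?thesis
    by (auto simp: Kmat_def outer_product_def axis_def vec_eq_iff field_simps)
qed

lemma matrix_inv_Kmat_add_replicate:
  assumes K_inv: "invertible (Kmat k r xb a)"
    and a_pos: "0 < a l"
    and r_nz: "r (xb l) \<noteq> 0"
    and denom: "real (a l) * (real (a l) + 1) / r (xb l)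
                  - matrix_inv (Kmat k r xb a) $ l $ l \<noteq> 0"
  shows "matrix_inv (Kmat k r xb (a(l := a l + 1)))
           = matrix_inv (Kmat k r xb a) + Bmat k r xb a l"
proof -
  define Ki where "Ki = matrix_inv (Kmat k r xb a)"
  define c where "c = r (xb l) / (real (a l) * (real (a l) + 1))"
  have w: "Ki *v axis l (- c) = (- c) *\<^sub>R column l Ki"
    by (simp add: matrix_vector_mult_def axis_def column_def vec_eq_iff if_distrib cong: if_cong)
  have v: "axis l 1 v* Ki = row l Ki"
    by (simp add: vector_matrix_mult_def axis_def row_def vec_eq_iff if_distrib if_distribR
        cong: if_cong)
  have "c \<noteq> 0" using a_pos r_nz by (simp add: c_def)
  then have factor: "1 - c * Ki $ l $ l = c * (1 / c - Ki $ l $ l)" by (simp add: field_simps)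
  moreover have "1 / c - Ki $ l $ l \<noteq> 0" using denom by (simp add: c_def Ki_def)
  ultimately have nz: "1 + axis l 1 \<bullet> (Ki *v axis l (- c)) \<noteq> 0"
    using \<open>c \<noteq> 0\<close> by (simp add: w inner_axis' column_def)
  have "Kmat k r xb (a(l := a l + 1)) = Kmat k r xb a + outer_product (axis l (- c)) (axis l 1)"
    unfolding c_def using a_pos by (rule Kmat_add_replicate)
  then have "matrix_inv (Kmat k r xb (a(l := a l + 1)))
      = Ki - (1 / (1 + axis l 1 \<bullet> (Ki *v axis l (- c)))) *\<^sub>R
          outer_product (Ki *v axis l (- c)) (axis l 1 v* Ki)"
    using Sherman_Morrison[where K = "Kmat k r xb a" and u = "axis l (- c)" and v = "axis l 1"]
      K_inv nz unfolding Ki_def by simp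
  also have "\<dots> = Ki - (1 / (1 - c * Ki $ l $ l)) *\<^sub>R
                        outer_product ((- c) *\<^sub>R column l Ki) (row l Ki)"
    by (simp add: w v inner_axis' column_def)
  also have "\<dots> = Ki + (1 / (1 / c - Ki $ l $ l)) *\<^sub>R
                        outer_product (column l Ki) (row l Ki)"
    using \<open>c \<noteq> 0\<close> by (simp add: factor outer_product_def vec_eq_iff)
  also have "\<dots> = Ki + Bmat k r xb a l"
    by (simp add: Bmat_def Let_def Ki_def c_def outer_product_def column_def row_def vec_eq_iff)
  finally show ?thesis unfolding Ki_def .
qed

theorem mainTheorem3:
  fixes D :: "(real^'d) set"
    and k :: "real^'d \<Rightarrow> real^'d \<Rightarrow> real"
    and r :: "real^'d \<Rightarrow> real"
    and xb :: "'n::finite \<Rightarrow> real^'d"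
    and a :: "'n \<Rightarrow> nat"
    and l :: 'n
  assumes D_meas: "D \<in> sets lborel"
    and k_meas: "(\<lambda>(x, y). k x y) \<in> borel_measurable borel"
    and k_pd: "pd_kernel k"
    and int_diag: "set_integrable lborel D (\<lambda>x. k x x)"
    and int_W: "\<And>i j. set_integrable lborel D (\<lambda>x. k (xb i) x * k (xb j) x)"
    and r_nonneg: "\<And>x. x \<in> D \<Longrightarrow> r x \<ge> 0"
    and xb_in: "\<And>i. xb i \<in> D"
    and xb_inj: "inj xb"
    and a_pos: "\<And>i. a i \<ge> 1"
    and K_inv: "invertible (Kmat k r xb a)"
    and r_pos: "r (xb l) > 0"
    and denom: "real (a l) * (real (a l) + 1) / r (xb l)
                  - matrix_inv (Kmat k r xb a) $ l $ l \<noteq> 0"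
  shows "IMSPE D k r xb (a(l := a l + 1))
           = IMSPE D k r xb a - trace (Bmat k r xb a l ** Wmat D k xb)"
proof -
  have sym: "\<And>x y. k x y = k y x" using k_pd unfolding pd_kernel_def by blast
  have "0 < a l" using a_pos[of l] by simp
  then have "matrix_inv (Kmat k r xb (a(l := a l + 1)))
      = matrix_inv (Kmat k r xb a) + Bmat k r xb a l"
    using K_inv r_pos denom by (intro matrix_inv_Kmat_add_replicate) auto
  then show ?thesis
    by (simp add: IMSPE_eq_trace[OF sym int_diag int_W] matrix_add_rdistrib trace_add)
qed

end
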